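(* Let $f:\mathbb{R}\to(0,\infty)$ be $C^4$, unimodal with maximum at $\mu$, of the form $f=e^{-H}$ with $H$ regularly varying (there is $\alpha>0$ with $H(tx)/H(t)\to x^\alpha$ as $|t|\to\infty$ for all $x>0$), and with $|(\log f)''''|<M$ for some $M>0$. Then for every $\beta>0$ and $\ell>0$, $$\ell^2\left[\tfrac12V(\beta)-I(\beta)+\tfrac{1}{4\beta}R(\beta)\right]=-\ell^2\,\mathrm{Var}_\beta\!\left(h(X)-\tfrac12k(X)\right).$$
   Context: $h=\log f$, $k(x)=(x-\mu)h'(x)$, $r(x)=(x-\mu)^2h''(x)$; $\mathbb{E}_\beta,\mathrm{Var}_\beta,\mathrm{Cov}_\beta$ are moments under $f^\beta/\int f^\beta$. $I(\beta)=\mathrm{Var}_\beta(h(X))$, $V(\beta)=\mathrm{Cov}_\beta(h(X),k(X))$, $R(\beta)=\mathbb{E}_\beta[r(X)-k(X)]$. *)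

theory Defs
  imports "HOL-Analysis.Analysis"
begin

definition C4 :: "(real \<Rightarrow> real) \<Rightarrow> bool" where
  "C4 f \<longleftrightarrow> (\<forall>j<4. \<forall>x. ((deriv ^^ j) f) differentiable (at x))
              \<and> continuous_on UNIV ((deriv ^^ 4) f)"

definition Ebeta :: "(real \<Rightarrow> real) \<Rightarrow> real \<Rightarrow> (real \<Rightarrow> real) \<Rightarrow> real" where
  "Ebeta f \<beta> g = (LINT x|lborel. g x * f x powr \<beta>) / (LINT x|lborel. f x powr \<beta>)"

definition Covbeta :: "(real \<Rightarrow> real) \<Rightarrow> real \<Rightarrow> (real \<Rightarrow> real) \<Rightarrow> (real \<Rightarrow> real) \<Rightarrow> real" where
  "Covbeta f \<beta> g1 g2 =
     Ebeta f \<beta> (\<lambda>x. (g1 x - Ebeta f \<beta> g1) * (g2 x - Ebeta f \<beta> g2))"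

definition Varbeta :: "(real \<Rightarrow> real) \<Rightarrow> real \<Rightarrow> (real \<Rightarrow> real) \<Rightarrow> real" where
  "Varbeta f \<beta> g = Ebeta f \<beta> (\<lambda>x. (g x - Ebeta f \<beta> g)\<^sup>2)"

definition hfun :: "(real \<Rightarrow> real) \<Rightarrow> real \<Rightarrow> real" where
  "hfun f = (\<lambda>x. ln (f x))"

definition kfun :: "(real \<Rightarrow> real) \<Rightarrow> real \<Rightarrow> real \<Rightarrow> real" where
  "kfun f \<mu> = (\<lambda>x. (x - \<mu>) * deriv (hfun f) x)"

definition rfun :: "(real \<Rightarrow> real) \<Rightarrow> real \<Rightarrow> real \<Rightarrow> real" where
  "rfun f \<mu> = (\<lambda>x. (x - \<mu>)\<^sup>2 * deriv (deriv (hfun f)) x)"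

definition Ifun :: "(real \<Rightarrow> real) \<Rightarrow> real \<Rightarrow> real" where
  "Ifun f \<beta> = Varbeta f \<beta> (hfun f)"

definition Vfun :: "(real \<Rightarrow> real) \<Rightarrow> real \<Rightarrow> real \<Rightarrow> real" where
  "Vfun f \<mu> \<beta> = Covbeta f \<beta> (hfun f) (kfun f \<mu>)"

definition Rfun :: "(real \<Rightarrow> real) \<Rightarrow> real \<Rightarrow> real \<Rightarrow> real" where
  "Rfun f \<mu> \<beta> = Ebeta f \<beta> (\<lambda>x. rfun f \<mu> x - kfun f \<mu> x)"

end

theory Submission
  imports Defs "HOL-Real_Asymp.Real_Asymp"
begin

(* Write h = ln f and g = f powr beta = exp (beta * h).  Regular variation of -h, used only
   through the ratio at 2, forces -h to grow like a power of |x| on both sides, so g decays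
   faster than every polynomial; the bound on the fourth derivative makes h, h' and h''
   polynomially bounded.  Hence every moment below exists and integrating (phi * g)' over the
   line gives the Stein identity E[phi'] + beta E[phi h'] = 0.  The choices phi = x - mu,
   h (x - mu) and (x - mu)^2 h' yield E k = -1/beta, V = 1/beta^2 and
   R = beta (2 V - Var k); together with Var (h - k/2) = I - V + Var k / 4 the bracket
   becomes V - I - Var k / 4 = - Var (h - k/2). *)

lemma integral_deriv_eq_zero:
  fixes F F' :: "real \<Rightarrow> real"
  assumes "\<And>x. DERIV F x :> F' x" "\<And>x. isCont F' x" "integrable lborel F'"
    and "(F \<longlongrightarrow> 0) at_top" "(F \<longlongrightarrow> 0) at_bot"
  shows "(LINT x|lborel. F' x) = 0"
proof -
  have "(LBINT x=-\<infinity>..\<infinity>. F' x) = 0 - 0"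
    using assms
    by (intro interval_integral_FTC_integrable[where F=F])
       (auto simp: has_real_derivative_iff_has_vector_derivative set_integrable_def
         ereal_tendsto_simps1)
  then show ?thesis
    by (simp add: interval_lebesgue_integral_def set_lebesgue_integral_def)
qed

lemma integrable_inverse_1_plus_square: "integrable lborel (\<lambda>x::real. inverse (1 + x\<^sup>2))"
proof -
  have "1 + x\<^sup>2 \<noteq> 0" for x :: real
    by (smt (verit) zero_le_power2)
  then have "set_integrable lborel (einterval (-\<infinity>) \<infinity>) (\<lambda>x::real. inverse (1 + x\<^sup>2))"
    by (intro interval_integral_FTC_nonneg(1)[where F=arctan and A="-pi/2" and B="pi/2"]
          AE_I2 continuous_intros)
       (auto simp: DERIV_arctan ereal_tendsto_simps1 tendsto_arctan_at_bot
          tendsto_arctan_at_top add_pos_nonneg)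
  then show ?thesis by (simp add: set_integrable_def)
qed

lemma integral_pos:
  fixes g :: "real \<Rightarrow> real"
  assumes "integrable lborel g" "\<And>x. g x > 0"
  shows "(LINT x|lborel. g x) > 0"
proof -
  have "\<not> (AE x in lborel. g x = 0)"
  proof
    assume "AE x in lborel. g x = 0"
    then have "AE x::real in lborel. False"
      by (rule eventually_mono) (metis assms(2) less_irrefl)
    then have "ae_filter (lborel :: real measure) = bot"
      by (simp add: trivial_limit_def)
    then show False by (simp add: ae_filter_eq_bot_iff)
  qed
  then have "(LINT x|lborel. g x) \<noteq> 0"
    using assms by (subst integral_nonneg_eq_0_iff_AE) (auto simp: less_imp_le)
  moreover have "(LINT x|lborel. g x) \<ge> 0"
    using assms by (simp add: less_imp_le)
  ultimately show ?thesis by simp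
qed

definition poly_bounded :: "(real \<Rightarrow> real) \<Rightarrow> bool" where
  "poly_bounded \<phi> \<longleftrightarrow> (\<exists>B n. \<forall>x. \<bar>\<phi> x\<bar> \<le> B * (1 + \<bar>x\<bar>) ^ n)"

lemma poly_boundedI: "(\<And>x. \<bar>\<phi> x\<bar> \<le> B * (1 + \<bar>x\<bar>) ^ n) \<Longrightarrow> poly_bounded \<phi>"
  unfolding poly_bounded_def by blast

lemma poly_boundedE:
  assumes "poly_bounded \<phi>"
  obtains B n where "B \<ge> 0" "\<And>x. \<bar>\<phi> x\<bar> \<le> B * (1 + \<bar>x\<bar>) ^ n"
proof -
  obtain B n where B: "\<And>x. \<bar>\<phi> x\<bar> \<le> B * (1 + \<bar>x\<bar>) ^ n"
    using assms unfolding poly_bounded_def by blast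
  have "B \<ge> 0" using B[of 0] by simp
  with B that show ?thesis by blast
qed

lemma poly_bounded_const: "poly_bounded (\<lambda>x. c)"
  by (rule poly_boundedI[of _ "\<bar>c\<bar>" 0]) simp

lemma poly_bounded_ident: "poly_bounded (\<lambda>x. x)"
  by (rule poly_boundedI[of _ 1 1]) simp

lemma poly_bounded_add:
  assumes "poly_bounded \<phi>" "poly_bounded \<psi>"
  shows "poly_bounded (\<lambda>x. \<phi> x + \<psi> x)"
proof -
  obtain B m where B: "B \<ge> 0" "\<And>x. \<bar>\<phi> x\<bar> \<le> B * (1 + \<bar>x\<bar>) ^ m"
    using poly_boundedE[OF assms(1)] by blast
  obtain C n where C: "C \<ge> 0" "\<And>x. \<bar>\<psi> x\<bar> \<le> C * (1 + \<bar>x\<bar>) ^ n"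
    using poly_boundedE[OF assms(2)] by blast
  have "\<bar>\<phi> x + \<psi> x\<bar> \<le> (B + C) * (1 + \<bar>x\<bar>) ^ max m n" for x
  proof -
    have "(1 + \<bar>x\<bar>) ^ m \<le> (1 + \<bar>x\<bar>) ^ max m n" "(1 + \<bar>x\<bar>) ^ n \<le> (1 + \<bar>x\<bar>) ^ max m n"
      by (auto intro: power_increasing)
    then have "B * (1 + \<bar>x\<bar>) ^ m + C * (1 + \<bar>x\<bar>) ^ n \<le> (B + C) * (1 + \<bar>x\<bar>) ^ max m n"
      using B(1) C(1) by (simp add: distrib_right add_mono mult_left_mono)
    then show ?thesis using B(2)[of x] C(2)[of x] by linarith
  qed
  then show ?thesis by (rule poly_boundedI)
qed

lemma poly_bounded_mult:
  assumes "poly_bounded \<phi>" "poly_bounded \<psi>"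
  shows "poly_bounded (\<lambda>x. \<phi> x * \<psi> x)"
proof -
  obtain B m where B: "B \<ge> 0" "\<And>x. \<bar>\<phi> x\<bar> \<le> B * (1 + \<bar>x\<bar>) ^ m"
    using poly_boundedE[OF assms(1)] by blast
  obtain C n where C: "C \<ge> 0" "\<And>x. \<bar>\<psi> x\<bar> \<le> C * (1 + \<bar>x\<bar>) ^ n"
    using poly_boundedE[OF assms(2)] by blast
  have "\<bar>\<phi> x * \<psi> x\<bar> \<le> (B * C) * (1 + \<bar>x\<bar>) ^ (m + n)" for x
  proof -
    have "\<bar>\<phi> x * \<psi> x\<bar> \<le> (B * (1 + \<bar>x\<bar>) ^ m) * (C * (1 + \<bar>x\<bar>) ^ n)"
      unfolding abs_mult using B C by (intro mult_mono) auto
    then show ?thesis by (simp add: power_add ac_simps)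
  qed
  then show ?thesis by (rule poly_boundedI)
qed

lemma poly_bounded_diff:
  assumes "poly_bounded \<phi>" "poly_bounded \<psi>"
  shows "poly_bounded (\<lambda>x. \<phi> x - \<psi> x)"
  using poly_bounded_add[OF assms(1) poly_bounded_mult[OF poly_bounded_const[of "-1"] assms(2)]]
  by simp

lemma poly_bounded_power:
  assumes "poly_bounded \<phi>"
  shows "poly_bounded (\<lambda>x. \<phi> x ^ k)"
  by (induction k) (simp_all add: poly_bounded_const poly_bounded_mult assms)

lemma poly_bounded_DERIV:
  assumes deriv: "\<And>x. DERIV \<phi> x :> \<phi>' x" and "poly_bounded \<phi>'"
  shows "poly_bounded \<phi>"
proof -
  obtain B n where B: "B \<ge> 0" "\<And>x. \<bar>\<phi>' x\<bar> \<le> B * (1 + \<bar>x\<bar>) ^ n"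
    using poly_boundedE[OF assms(2)] by blast
  have "\<bar>\<phi> x\<bar> \<le> (\<bar>\<phi> 0\<bar> + B) * (1 + \<bar>x\<bar>) ^ Suc n" for x
  proof -
    have "\<bar>\<phi>' z\<bar> \<le> B * (1 + \<bar>x\<bar>) ^ n" if "z \<in> cball 0 \<bar>x\<bar>" for z
    proof -
      have "(1 + \<bar>z\<bar>) ^ n \<le> (1 + \<bar>x\<bar>) ^ n" using that by (intro power_mono) auto
      then show ?thesis using B(1) B(2)[of z] by (meson mult_left_mono order_trans)
    qed
    then have "norm (\<phi> x - \<phi> 0) \<le> B * (1 + \<bar>x\<bar>) ^ n * norm (x - 0)"
      using deriv by (intro field_differentiable_bound[of "cball 0 \<bar>x\<bar>"])
        (auto intro: has_field_derivative_at_within)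
    also have "\<dots> \<le> B * (1 + \<bar>x\<bar>) ^ Suc n"
      using B(1) by (simp add: mult_left_mono mult_right_mono mult.assoc mult.left_commute)
    finally have "\<bar>\<phi> x\<bar> \<le> \<bar>\<phi> 0\<bar> + B * (1 + \<bar>x\<bar>) ^ Suc n"
      unfolding real_norm_def by linarith
    moreover have "\<bar>\<phi> 0\<bar> * 1 \<le> \<bar>\<phi> 0\<bar> * (1 + \<bar>x\<bar>) ^ Suc n"
      by (intro mult_left_mono one_le_power) auto
    ultimately show ?thesis by (simp add: distrib_right)
  qed
  then show ?thesis by (rule poly_boundedI)
qed

lemma poly_bounded_mult_decay_bound:
  fixes g \<phi> :: "real \<Rightarrow> real"
  assumes cont_g: "\<And>x. isCont g x" and g_nonneg: "\<And>x. g x \<ge> 0"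
    and decay: "\<And>n. \<exists>T. \<forall>x. \<bar>x\<bar> \<ge> T \<longrightarrow> (1 + \<bar>x\<bar>) ^ n * g x \<le> 1"
    and cont_\<phi>: "\<And>x. isCont \<phi> x" and "poly_bounded \<phi>"
  obtains D where "\<And>x. \<bar>\<phi> x * g x\<bar> \<le> D * inverse (1 + x\<^sup>2)"
proof -
  obtain B n where B: "B \<ge> 0" "\<And>x. \<bar>\<phi> x\<bar> \<le> B * (1 + \<bar>x\<bar>) ^ n"
    using poly_boundedE[OF \<open>poly_bounded \<phi>\<close>] by blast
  obtain T where T: "\<And>x. \<bar>x\<bar> \<ge> T \<Longrightarrow> (1 + \<bar>x\<bar>) ^ n * (1 + \<bar>x\<bar>)\<^sup>2 * g x \<le> 1"
    using decay[of "n + 2"] unfolding power_add by blast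
  have "continuous_on {-\<bar>T\<bar>..\<bar>T\<bar>} (\<lambda>x. \<phi> x * g x)"
    using isCont_mult[OF cont_\<phi> cont_g] by (intro continuous_at_imp_continuous_on) blast
  then obtain K where K: "K \<ge> 0" "\<And>x. x \<in> {-\<bar>T\<bar>..\<bar>T\<bar>} \<Longrightarrow> norm (\<phi> x * g x) \<le> K"
    by (rule continuous_on_compact_bound[OF compact_Icc]) auto
  have "\<bar>\<phi> x * g x\<bar> \<le> (K * (1 + T\<^sup>2) + B) * inverse (1 + x\<^sup>2)" for x
  proof (cases "\<bar>x\<bar> \<le> \<bar>T\<bar>")
    case True
    then have "\<bar>\<phi> x * g x\<bar> \<le> K"
      using K(2)[of x] by (simp add: abs_le_iff)
    have "x\<^sup>2 \<le> T\<^sup>2" using True by (simp add: abs_le_square_iff)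
    then have "1 \<le> (1 + T\<^sup>2) * inverse (1 + x\<^sup>2)"
      by (simp add: le_divide_eq add_pos_nonneg flip: divide_inverse)
    then have "K * 1 \<le> K * (1 + T\<^sup>2) * inverse (1 + x\<^sup>2)"
      unfolding mult.assoc using K(1) by (intro mult_left_mono) auto
    also have "\<dots> \<le> (K * (1 + T\<^sup>2) + B) * inverse (1 + x\<^sup>2)"
      using B(1) by (intro mult_right_mono) (auto simp: add_pos_nonneg)
    finally show ?thesis
      using \<open>\<bar>\<phi> x * g x\<bar> \<le> K\<close> by simp
  next
    case False
    have pos: "1 + \<bar>x\<bar> > 0" by simp
    have "\<bar>\<phi> x * g x\<bar> \<le> B * (1 + \<bar>x\<bar>) ^ n * g x"
      unfolding abs_mult using B(2)[of x] g_nonneg[of x] by (simp add: mult_right_mono)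
    also have "\<dots> = B * ((1 + \<bar>x\<bar>) ^ n * (1 + \<bar>x\<bar>)\<^sup>2 * g x) / (1 + \<bar>x\<bar>)\<^sup>2"
      using pos by simp
    also have "\<dots> \<le> B / (1 + \<bar>x\<bar>)\<^sup>2"
      using T[of x] False B(1) by (intro divide_right_mono mult_left_le) auto
    also have "\<dots> \<le> B * inverse (1 + x\<^sup>2)"
    proof -
      have "inverse ((1 + \<bar>x\<bar>)\<^sup>2) \<le> inverse (1 + x\<^sup>2)"
        by (rule le_imp_inverse_le) (simp_all add: power2_eq_square algebra_simps add_pos_nonneg)
      then show ?thesis using B(1) by (simp add: divide_inverse mult_left_mono)
    qed
    also have "\<dots> \<le> (K * (1 + T\<^sup>2) + B) * inverse (1 + x\<^sup>2)"
      using K(1) by (intro mult_right_mono) (auto simp: add_pos_nonneg)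
    finally show ?thesis .
  qed
  then show ?thesis by (rule that)
qed

context
  fixes g :: "real \<Rightarrow> real"
  assumes cont_g: "\<And>x. isCont g x" and g_nonneg: "\<And>x. g x \<ge> 0"
    and decay: "\<And>n. \<exists>T. \<forall>x. \<bar>x\<bar> \<ge> T \<longrightarrow> (1 + \<bar>x\<bar>) ^ n * g x \<le> 1"
begin

lemma integrable_poly_bounded_mult:
  assumes "\<And>x. isCont \<phi> x" "poly_bounded \<phi>"
  shows "integrable lborel (\<lambda>x. \<phi> x * g x)"
proof -
  obtain D where D: "\<And>x. \<bar>\<phi> x * g x\<bar> \<le> D * inverse (1 + x\<^sup>2)"
    using poly_bounded_mult_decay_bound[OF cont_g g_nonneg decay assms] by blast
  show ?thesis
  proof (rule Bochner_Integration.integrable_bound)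
    show "integrable lborel (\<lambda>x. D * inverse (1 + x\<^sup>2))"
      using integrable_inverse_1_plus_square by (rule integrable_mult_right)
    show "(\<lambda>x. \<phi> x * g x) \<in> borel_measurable lborel"
      using isCont_mult[OF assms(1) cont_g]
      by (simp add: borel_measurable_continuous_onI continuous_at_imp_continuous_on)
    show "AE x in lborel. norm (\<phi> x * g x) \<le> norm (D * inverse (1 + x\<^sup>2))"
      using D by (intro AE_I2) (smt (verit) real_norm_def)
  qed
qed

lemma tendsto_poly_bounded_mult:
  assumes "\<And>x. isCont \<phi> x" "poly_bounded \<phi>"
  shows "((\<lambda>x. \<phi> x * g x) \<longlongrightarrow> 0) at_top" "((\<lambda>x. \<phi> x * g x) \<longlongrightarrow> 0) at_bot"
proof -
  obtain D where D: "\<And>x. \<bar>\<phi> x * g x\<bar> \<le> D * inverse (1 + x\<^sup>2)"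
    using poly_bounded_mult_decay_bound[OF cont_g g_nonneg decay assms] by blast
  have D_norm: "\<forall>x. norm (\<phi> x * g x) \<le> D * inverse (1 + x\<^sup>2)"
    using D by simp
  show "((\<lambda>x. \<phi> x * g x) \<longlongrightarrow> 0) at_top"
    by (rule Lim_null_comparison[OF always_eventually[OF D_norm]]) real_asymp
  show "((\<lambda>x. \<phi> x * g x) \<longlongrightarrow> 0) at_bot"
    by (rule Lim_null_comparison[OF always_eventually[OF D_norm]]) real_asymp
qed

end

lemma doubling_imp_powr_lower_bound:
  fixes G :: "real \<Rightarrow> real"
  assumes mono: "mono_on {\<nu>..} G" and lim: "((\<lambda>t. G (t * 2) / G t) \<longlongrightarrow> L) at_top"
    and "L > 1"
  obtains a \<gamma> T where "a > 0" "\<gamma> > 0" "\<And>t. t \<ge> T \<Longrightarrow> a * t powr \<gamma> \<le> G t"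
proof -
  define c where "c = (1 + L) / 2"
  have "c > 1" "c < L" using \<open>L > 1\<close> by (auto simp: c_def)
  have "eventually (\<lambda>t. G (t * 2) / G t > c) at_top"
    using lim \<open>c < L\<close> by (rule order_tendstoD)
  then obtain T0 where T0: "\<And>t. t \<ge> T0 \<Longrightarrow> G (t * 2) / G t > c"
    by (auto simp: eventually_at_top_linorder)
  define T where "T = max (max T0 \<nu>) 1"
  have T: "T \<ge> T0" "T \<ge> \<nu>" "T \<ge> 1" by (auto simp: T_def)
  have G_mono: "G s \<le> G t" if "T \<le> s" "s \<le> t" for s t
    using mono that T by (auto simp: mono_on_def)
  have G_pos: "G t > 0" if "t \<ge> T" for t
  proof -
    have "G t \<le> G (t * 2)" using G_mono[of t "t * 2"] that T by auto
    moreover have "G (t * 2) / G t > 1" using T0[of t] that T \<open>c > 1\<close> by auto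
    ultimately show ?thesis
      by (auto simp: less_divide_eq_1)
  qed
  have doubling: "c * G t < G (t * 2)" if "t \<ge> T" for t
    using T0[of t] G_pos[OF that] that T by (simp add: pos_less_divide_eq)
  define \<gamma> where "\<gamma> = log 2 c"
  have "\<gamma> > 0" "2 powr \<gamma> = c" using \<open>c > 1\<close> by (simp_all add: \<gamma>_def)
  define a where "a = G T / (2 * T) powr \<gamma>"
  have "a > 0" using G_pos[of T] T by (simp add: a_def)
  have bound: "a * t powr \<gamma> \<le> G t" if "T \<le> t" "t \<le> 2 ^ Suc n * T" for n t
    using that
  proof (induction n arbitrary: t)
    case 0
    then have "a * t powr \<gamma> \<le> a * (2 * T) powr \<gamma>"
      using T \<open>\<gamma> > 0\<close> \<open>a > 0\<close> by (intro mult_left_mono powr_mono2) auto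
    also have "\<dots> = G T" using T by (simp add: a_def)
    also have "\<dots> \<le> G t" using G_mono[of T t] 0 by auto
    finally show ?case .
  next
    case (Suc n)
    show ?case
    proof (cases "t \<le> 2 ^ Suc n * T")
      case True
      then show ?thesis using Suc by blast
    next
      case False
      moreover have "2 * T \<le> 2 ^ Suc n * T"
        using T by (intro mult_right_mono) (auto simp: one_le_power)
      ultimately have half: "T \<le> t / 2" "t / 2 \<le> 2 ^ Suc n * T"
        using Suc.prems by auto
      have "a * t powr \<gamma> = c * (a * (t / 2) powr \<gamma>)"
        using half T \<open>2 powr \<gamma> = c\<close> \<open>c > 1\<close> by (simp add: powr_divide)
      also have "\<dots> \<le> c * G (t / 2)"
        using Suc.IH[OF half] \<open>c > 1\<close> by (intro mult_left_mono) auto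
      also have "\<dots> < G t"
        using doubling[OF half(1)] by simp
      finally show ?thesis by simp
    qed
  qed
  have "a * t powr \<gamma> \<le> G t" if "t \<ge> T" for t
  proof -
    obtain n where "t / T < 2 ^ n" using real_arch_pow[of 2 "t / T"] by auto
    then have "t < 2 ^ n * T" using T by (simp add: divide_less_eq)
    also have "\<dots> \<le> 2 ^ Suc n * T" using T by (intro mult_right_mono) auto
    finally show ?thesis using bound[OF that, of n] by simp
  qed
  with \<open>a > 0\<close> \<open>\<gamma> > 0\<close> show ?thesis by (rule that)
qed

lemma doubling_imp_ln_le:
  fixes G :: "real \<Rightarrow> real"
  assumes "mono_on {\<nu>..} G" "((\<lambda>t. G (t * 2) / G t) \<longlongrightarrow> L) at_top" "L > 1"
  shows "eventually (\<lambda>t. c * ln (1 + t) \<le> G t) at_top"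
proof -
  obtain a \<gamma> T where "a > 0" "\<gamma> > 0" and G: "\<And>t. t \<ge> T \<Longrightarrow> a * t powr \<gamma> \<le> G t"
    using doubling_imp_powr_lower_bound[OF assms] by blast
  have "eventually (\<lambda>t. c * ln (1 + t) \<le> a * t powr \<gamma>) at_top"
    using \<open>a > 0\<close> \<open>\<gamma> > 0\<close> by real_asymp
  moreover have "eventually (\<lambda>t. t \<ge> T) at_top" by simp
  ultimately show ?thesis
    by eventually_elim (use G in fastforce)
qed

lemma regularly_varying_powr_decay:
  fixes f :: "real \<Rightarrow> real"
  assumes pos: "\<And>x. f x > 0"
    and unimodal: "mono_on {..\<mu>} f" "antimono_on {\<mu>..} f"
    and regvar: "\<exists>\<alpha>>0. \<forall>x>0.
        ((\<lambda>t. (- ln (f (t * x))) / (- ln (f t))) \<longlongrightarrow> x powr \<alpha>) at_infinity"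
    and "\<beta> > 0"
  shows "\<exists>T. \<forall>x. \<bar>x\<bar> \<ge> T \<longrightarrow> (1 + \<bar>x\<bar>) ^ n * f x powr \<beta> \<le> 1"
proof -
  define H where "H x = - ln (f x)" for x
  obtain \<alpha> where "\<alpha> > 0" and lim: "((\<lambda>t. H (t * 2) / H t) \<longlongrightarrow> 2 powr \<alpha>) at_infinity"
    using regvar unfolding H_def by force
  have "2 powr \<alpha> > (1::real)" using \<open>\<alpha> > 0\<close> by simp
  have lim_right: "((\<lambda>t. H (t * 2) / H t) \<longlongrightarrow> 2 powr \<alpha>) at_top"
    using lim at_top_le_at_infinity by (rule tendsto_mono[rotated])
  have "((\<lambda>t. H (t * 2) / H t) \<longlongrightarrow> 2 powr \<alpha>) at_bot"
    using lim at_bot_le_at_infinity by (rule tendsto_mono[rotated])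
  from filterlim_compose[OF this filterlim_uminus_at_bot_at_top]
  have lim_left: "((\<lambda>t. H (- (t * 2)) / H (- t)) \<longlongrightarrow> 2 powr \<alpha>) at_top"
    by simp
  have "mono_on {\<mu>..} H" "mono_on {-\<mu>..} (\<lambda>t. H (- t))"
    using unimodal pos unfolding H_def mono_on_def monotone_on_def by auto
  from doubling_imp_ln_le[OF this(1) lim_right \<open>2 powr \<alpha> > 1\<close>]
    doubling_imp_ln_le[OF this(2) lim_left \<open>2 powr \<alpha> > 1\<close>]
  have "eventually (\<lambda>t. n / \<beta> * ln (1 + t) \<le> H t) at_top"
    "eventually (\<lambda>t. n / \<beta> * ln (1 + t) \<le> H (- t)) at_top"
    by blast+
  then have "eventually (\<lambda>t. n / \<beta> * ln (1 + t) \<le> H t \<and> n / \<beta> * ln (1 + t) \<le> H (- t)) at_top"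
    by (rule eventually_conj)
  then obtain T where T: "\<And>t. t \<ge> T \<Longrightarrow> n / \<beta> * ln (1 + t) \<le> H t \<and> n / \<beta> * ln (1 + t) \<le> H (- t)"
    unfolding eventually_at_top_linorder by blast
  have "(1 + \<bar>x\<bar>) ^ n * f x powr \<beta> \<le> 1" if "\<bar>x\<bar> \<ge> T" for x
  proof -
    have "n / \<beta> * ln (1 + \<bar>x\<bar>) \<le> H x"
      using T[OF that] by (cases "x \<ge> 0") auto
    then have "n * ln (1 + \<bar>x\<bar>) - \<beta> * H x \<le> 0"
      using \<open>\<beta> > 0\<close> by (simp add: field_simps)
    moreover have "(1 + \<bar>x\<bar>) ^ n * f x powr \<beta> = exp (n * ln (1 + \<bar>x\<bar>) - \<beta> * H x)"
      using pos[of x] by (simp add: H_def powr_def exp_add exp_of_nat_mult add_pos_nonneg)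
    ultimately show ?thesis by simp
  qed
  then show ?thesis by blast
qed

lemma C4_ln_differentiable:
  fixes f :: "real \<Rightarrow> real"
  assumes pos: "\<And>x. f x > 0" and "C4 f" and "j < 4"
  shows "(deriv ^^ j) (\<lambda>x. ln (f x)) differentiable (at x)"
proof -
  define f1 where "f1 = deriv f"
  define f2 where "f2 = deriv f1"
  define f3 where "f3 = deriv f2"
  have f_diff: "(deriv ^^ i) f differentiable (at x)" if "i < 4" for i x
    using \<open>C4 f\<close> that unfolding C4_def by blast
  have diff: "f differentiable (at x)" "f1 differentiable (at x)" "f2 differentiable (at x)"
    "f3 differentiable (at x)" for x
    using f_diff[of 0 x] f_diff[of 1 x] f_diff[of 2 x] f_diff[of 3 x]
    by (simp_all add: f1_def f2_def f3_def numeral_eq_Suc)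
  then have D: "DERIV f x :> f1 x" "DERIV f1 x :> f2 x" "DERIV f2 x :> f3 x" for x
    by (simp_all add: f1_def f2_def f3_def DERIV_deriv_iff_real_differentiable)
  have f_nz: "f x \<noteq> 0" for x using pos[of x] by simp
  define h1 where "h1 x = f1 x / f x" for x
  define h2 where "h2 x = f2 x / f x - (h1 x)\<^sup>2" for x
  define h3 where "h3 x = (f3 x * f x - f2 x * f1 x) / (f x)\<^sup>2 - 2 * h1 x * h2 x" for x
  have D_ln: "DERIV (\<lambda>x. ln (f x)) x :> h1 x" for x
    unfolding h1_def using pos[of x] by (auto intro!: derivative_eq_intros D simp: field_simps)
  moreover have "DERIV h1 x :> h2 x" for x
    unfolding h1_def h2_def using f_nz[of x]
    by (auto intro!: derivative_eq_intros D simp: field_simps power2_eq_square)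
  moreover have "DERIV h2 x :> h3 x" for x
    unfolding h1_def h2_def h3_def using f_nz[of x]
    by (auto intro!: derivative_eq_intros D simp: field_simps power2_eq_square)
  ultimately have derivs: "deriv (\<lambda>x. ln (f x)) = h1" "deriv h1 = h2" "deriv h2 = h3"
    by (auto intro!: ext DERIV_imp_deriv)
  have "(\<lambda>x. ln (f x)) differentiable (at x)"
    using D_ln real_differentiable_def by blast
  moreover have "h1 differentiable (at x)" "h2 differentiable (at x)" "h3 differentiable (at x)"
    unfolding h1_def h2_def h3_def using diff f_nz by simp_all
  ultimately show ?thesis
    using \<open>j < 4\<close> by (auto simp: less_Suc_eq numeral_eq_Suc derivs)
qed

lemma Ebeta_add:
  assumes "integrable lborel (\<lambda>x. u x * f x powr \<beta>)" "integrable lborel (\<lambda>x. v x * f x powr \<beta>)"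
  shows "Ebeta f \<beta> (\<lambda>x. u x + v x) = Ebeta f \<beta> u + Ebeta f \<beta> v"
  using assms by (simp add: Ebeta_def distrib_right add_divide_distrib)

lemma Ebeta_diff:
  assumes "integrable lborel (\<lambda>x. u x * f x powr \<beta>)" "integrable lborel (\<lambda>x. v x * f x powr \<beta>)"
  shows "Ebeta f \<beta> (\<lambda>x. u x - v x) = Ebeta f \<beta> u - Ebeta f \<beta> v"
  using assms by (simp add: Ebeta_def left_diff_distrib diff_divide_distrib)

lemma Ebeta_cmult: "Ebeta f \<beta> (\<lambda>x. c * u x) = c * Ebeta f \<beta> u"
  by (simp add: Ebeta_def mult.assoc)

lemma Ebeta_divide_const: "Ebeta f \<beta> (\<lambda>x. u x / c) = Ebeta f \<beta> u / c"
  by (simp add: Ebeta_def)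

lemma Ebeta_const:
  assumes "(LINT x|lborel. f x powr \<beta>) \<noteq> 0"
  shows "Ebeta f \<beta> (\<lambda>x. c) = c"
  using assms by (simp add: Ebeta_def)

lemma Covbeta_eq:
  assumes "(LINT x|lborel. f x powr \<beta>) \<noteq> 0" "integrable lborel (\<lambda>x. f x powr \<beta>)"
    "integrable lborel (\<lambda>x. u x * f x powr \<beta>)" "integrable lborel (\<lambda>x. v x * f x powr \<beta>)"
    "integrable lborel (\<lambda>x. u x * v x * f x powr \<beta>)"
  shows "Covbeta f \<beta> u v = Ebeta f \<beta> (\<lambda>x. u x * v x) - Ebeta f \<beta> u * Ebeta f \<beta> v"
proof -
  define a b where "a = Ebeta f \<beta> u" and "b = Ebeta f \<beta> v"
  have int_bu: "integrable lborel (\<lambda>x. b * u x * f x powr \<beta>)"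
    and int_av: "integrable lborel (\<lambda>x. a * v x * f x powr \<beta>)"
    and int_ab: "integrable lborel (\<lambda>x. a * b * f x powr \<beta>)"
    using assms by (simp_all add: mult.assoc)
  have "Covbeta f \<beta> u v = Ebeta f \<beta> (\<lambda>x. (u x * v x - b * u x) - (a * v x - a * b))"
    unfolding Covbeta_def a_def[symmetric] b_def[symmetric]
    by (simp add: algebra_simps)
  also have "\<dots> = (Ebeta f \<beta> (\<lambda>x. u x * v x) - b * a) - (a * b - a * b)"
    using assms int_bu int_av int_ab
    by (simp add: Ebeta_diff Ebeta_cmult Ebeta_const left_diff_distrib a_def b_def)
  finally show ?thesis by (simp add: a_def b_def)
qed

lemma Varbeta_eq_Covbeta: "Varbeta f \<beta> u = Covbeta f \<beta> u u"
  by (simp add: Varbeta_def Covbeta_def power2_eq_square)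

lemma Ebeta_integration_by_parts:
  fixes f \<phi> \<phi>' h' :: "real \<Rightarrow> real"
  assumes pos: "\<And>x. f x > 0"
    and D_h: "\<And>x. DERIV (hfun f) x :> h' x" and D_\<phi>: "\<And>x. DERIV \<phi> x :> \<phi>' x"
    and cont: "\<And>x. isCont \<phi>' x" "\<And>x. isCont h' x"
    and int: "integrable lborel (\<lambda>x. \<phi>' x * f x powr \<beta>)"
      "integrable lborel (\<lambda>x. \<phi> x * h' x * f x powr \<beta>)"
    and lim: "((\<lambda>x. \<phi> x * f x powr \<beta>) \<longlongrightarrow> 0) at_top" "((\<lambda>x. \<phi> x * f x powr \<beta>) \<longlongrightarrow> 0) at_bot"
  shows "Ebeta f \<beta> \<phi>' + \<beta> * Ebeta f \<beta> (\<lambda>x. \<phi> x * h' x) = 0"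
proof -
  define g where "g x = f x powr \<beta>" for x
  have g_exp: "g = (\<lambda>x. exp (\<beta> * hfun f x))"
    using pos by (simp add: fun_eq_iff g_def powr_def hfun_def less_imp_neq[symmetric])
  have D_g: "DERIV g x :> \<beta> * h' x * g x" for x
    unfolding g_exp using DERIV_fun_exp[OF DERIV_cmult[OF D_h]] by (simp add: ac_simps)
  have "(LINT x|lborel. \<phi>' x * g x + \<beta> * (\<phi> x * h' x * g x)) = 0"
  proof (rule integral_deriv_eq_zero)
    show "DERIV (\<lambda>x. \<phi> x * g x) x :> \<phi>' x * g x + \<beta> * (\<phi> x * h' x * g x)" for x
      by (auto intro!: derivative_eq_intros D_\<phi> D_g simp: algebra_simps)
    show "isCont (\<lambda>x. \<phi>' x * g x + \<beta> * (\<phi> x * h' x * g x)) x" for x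
      using DERIV_isCont[OF D_\<phi>] DERIV_isCont[OF D_g] cont by (intro continuous_intros)
    show "integrable lborel (\<lambda>x. \<phi>' x * g x + \<beta> * (\<phi> x * h' x * g x))"
      using int by (simp add: g_def)
  qed (use lim in \<open>simp_all add: g_def\<close>)
  then have "(LINT x|lborel. \<phi>' x * g x) + \<beta> * (LINT x|lborel. \<phi> x * h' x * g x) = 0"
    using int by (simp add: g_def)
  then show ?thesis
    by (simp add: Ebeta_def g_def add_divide_distrib[symmetric] mult.assoc)
qed

lemmas poly_bounded_intros =
  poly_bounded_const poly_bounded_ident poly_bounded_add poly_bounded_diff poly_bounded_mult
  poly_bounded_power

locale tempered_density =
  fixes f :: "real \<Rightarrow> real" and \<beta> :: real
  assumes pos: "\<And>x. f x > 0" and beta_pos: "\<beta> > 0"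
    and DERIV_h: "\<And>x. DERIV (hfun f) x :> deriv (hfun f) x"
    and DERIV_h': "\<And>x. DERIV (deriv (hfun f)) x :> deriv (deriv (hfun f)) x"
    and isCont_h'': "\<And>x. isCont (deriv (deriv (hfun f))) x"
    and poly_bounded_h: "poly_bounded (hfun f)"
    and poly_bounded_h': "poly_bounded (deriv (hfun f))"
    and poly_bounded_h'': "poly_bounded (deriv (deriv (hfun f)))"
    and rapid_decay: "\<And>n. \<exists>T. \<forall>x. \<bar>x\<bar> \<ge> T \<longrightarrow> (1 + \<bar>x\<bar>) ^ n * f x powr \<beta> \<le> 1"
begin

lemma isCont_h: "isCont (hfun f) x"
  using DERIV_h by (rule DERIV_isCont)

lemma isCont_h': "isCont (deriv (hfun f)) x"
  using DERIV_h' by (rule DERIV_isCont)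

lemma isCont_k: "isCont (kfun f \<mu>) x"
  unfolding kfun_def by (intro continuous_intros isCont_h')

lemma isCont_r: "isCont (rfun f \<mu>) x"
  unfolding rfun_def by (intro continuous_intros isCont_h'')

lemma poly_bounded_k: "poly_bounded (kfun f \<mu>)"
  unfolding kfun_def by (intro poly_bounded_intros poly_bounded_h')

lemma poly_bounded_r: "poly_bounded (rfun f \<mu>)"
  unfolding rfun_def by (intro poly_bounded_intros poly_bounded_h'')

lemma isCont_density: "isCont (\<lambda>x. f x powr \<beta>) x"
proof -
  have "(\<lambda>x. f x powr \<beta>) = (\<lambda>x. exp (\<beta> * hfun f x))"
    using pos by (simp add: fun_eq_iff powr_def hfun_def less_imp_neq[symmetric])
  then show ?thesis by (simp add: continuous_intros isCont_h)
qed

lemma integrable_poly: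
  assumes "\<And>x. isCont \<phi> x" "poly_bounded \<phi>"
  shows "integrable lborel (\<lambda>x. \<phi> x * f x powr \<beta>)"
  using integrable_poly_bounded_mult[OF isCont_density _ rapid_decay assms] by simp

lemma tendsto_poly:
  assumes "\<And>x. isCont \<phi> x" "poly_bounded \<phi>"
  shows "((\<lambda>x. \<phi> x * f x powr \<beta>) \<longlongrightarrow> 0) at_top" "((\<lambda>x. \<phi> x * f x powr \<beta>) \<longlongrightarrow> 0) at_bot"
  using tendsto_poly_bounded_mult[OF isCont_density _ rapid_decay assms] by simp_all

lemma integrable_density: "integrable lborel (\<lambda>x. f x powr \<beta>)"
  using integrable_poly[of "\<lambda>x. 1"] by (simp add: poly_bounded_const)

lemma normalizer_pos: "(LINT x|lborel. f x powr \<beta>) > 0"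
proof (rule integral_pos[OF integrable_density])
  show "f x powr \<beta> > 0" for x using pos[of x] by simp
qed

lemma Ebeta_const_1: "Ebeta f \<beta> (\<lambda>x. c) = c"
  using normalizer_pos by (intro Ebeta_const) simp

lemma Covbeta_poly:
  assumes "\<And>x. isCont u x" "poly_bounded u" "\<And>x. isCont v x" "poly_bounded v"
  shows "Covbeta f \<beta> u v = Ebeta f \<beta> (\<lambda>x. u x * v x) - Ebeta f \<beta> u * Ebeta f \<beta> v"
  using normalizer_pos assms integrable_density
  by (intro Covbeta_eq integrable_poly continuous_intros poly_bounded_intros) auto

lemma Ebeta_integration_by_parts_poly:
  assumes "\<And>x. DERIV \<phi> x :> \<phi>' x" "\<And>x. isCont \<phi>' x" "poly_bounded \<phi>" "poly_bounded \<phi>'"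
  shows "Ebeta f \<beta> \<phi>' + \<beta> * Ebeta f \<beta> (\<lambda>x. \<phi> x * deriv (hfun f) x) = 0"
  using DERIV_isCont[OF assms(1)] assms
  by (intro Ebeta_integration_by_parts[OF pos DERIV_h] integrable_poly tendsto_poly isCont_h'
      continuous_intros poly_bounded_intros poly_bounded_h')

lemma Ebeta_add_poly:
  assumes "\<And>x. isCont u x" "poly_bounded u" "\<And>x. isCont v x" "poly_bounded v"
  shows "Ebeta f \<beta> (\<lambda>x. u x + v x) = Ebeta f \<beta> u + Ebeta f \<beta> v"
  using assms by (intro Ebeta_add integrable_poly)

lemma Ebeta_diff_poly:
  assumes "\<And>x. isCont u x" "poly_bounded u" "\<And>x. isCont v x" "poly_bounded v"
  shows "Ebeta f \<beta> (\<lambda>x. u x - v x) = Ebeta f \<beta> u - Ebeta f \<beta> v"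
  using assms by (intro Ebeta_diff integrable_poly)

lemmas moment_intros = isCont_h isCont_k isCont_r poly_bounded_h poly_bounded_k poly_bounded_r
  continuous_intros poly_bounded_intros

lemma Ebeta_kfun: "Ebeta f \<beta> (kfun f \<mu>) = - 1 / \<beta>"
proof -
  have "Ebeta f \<beta> (\<lambda>x. 1) + \<beta> * Ebeta f \<beta> (\<lambda>x. (x - \<mu>) * deriv (hfun f) x) = 0"
    by (rule Ebeta_integration_by_parts_poly) (auto intro!: derivative_eq_intros poly_bounded_intros)
  then show ?thesis
    using beta_pos by (simp add: Ebeta_const_1 kfun_def field_simps)
qed

lemma Vfun_eq: "Vfun f \<mu> \<beta> = 1 / \<beta>\<^sup>2"
proof -
  have "DERIV (\<lambda>x. hfun f x * (x - \<mu>)) x :> kfun f \<mu> x + hfun f x" for x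
    by (auto intro!: derivative_eq_intros DERIV_h simp: kfun_def)
  then have "Ebeta f \<beta> (\<lambda>x. kfun f \<mu> x + hfun f x)
      + \<beta> * Ebeta f \<beta> (\<lambda>x. hfun f x * (x - \<mu>) * deriv (hfun f) x) = 0"
    by (rule Ebeta_integration_by_parts_poly) (intro moment_intros poly_bounded_h)+
  moreover have "(\<lambda>x. hfun f x * (x - \<mu>) * deriv (hfun f) x) = (\<lambda>x. hfun f x * kfun f \<mu> x)"
    by (simp add: fun_eq_iff kfun_def)
  ultimately have "Ebeta f \<beta> (kfun f \<mu>) + Ebeta f \<beta> (hfun f)
      + \<beta> * Ebeta f \<beta> (\<lambda>x. hfun f x * kfun f \<mu> x) = 0"
    by (simp add: Ebeta_add_poly moment_intros)
  then show ?thesis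
    using beta_pos by (simp add: Vfun_def Covbeta_poly moment_intros Ebeta_kfun field_simps power2_eq_square)
qed

lemma Rfun_eq: "Rfun f \<mu> \<beta> = \<beta> * (2 * Vfun f \<mu> \<beta> - Varbeta f \<beta> (kfun f \<mu>))"
proof -
  have "DERIV (\<lambda>x. (x - \<mu>)\<^sup>2 * deriv (hfun f) x) x :> 2 * kfun f \<mu> x + rfun f \<mu> x" for x
    by (auto intro!: derivative_eq_intros DERIV_h' simp: kfun_def rfun_def)
  then have "Ebeta f \<beta> (\<lambda>x. 2 * kfun f \<mu> x + rfun f \<mu> x)
      + \<beta> * Ebeta f \<beta> (\<lambda>x. (x - \<mu>)\<^sup>2 * deriv (hfun f) x * deriv (hfun f) x) = 0"
    by (rule Ebeta_integration_by_parts_poly) (intro moment_intros poly_bounded_h')+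
  moreover have "(\<lambda>x. (x - \<mu>)\<^sup>2 * deriv (hfun f) x * deriv (hfun f) x) = (\<lambda>x. kfun f \<mu> x * kfun f \<mu> x)"
    by (simp add: fun_eq_iff kfun_def power2_eq_square)
  ultimately have "2 * Ebeta f \<beta> (kfun f \<mu>) + Ebeta f \<beta> (rfun f \<mu>)
      + \<beta> * Ebeta f \<beta> (\<lambda>x. kfun f \<mu> x * kfun f \<mu> x) = 0"
    by (simp add: Ebeta_add_poly Ebeta_cmult moment_intros)
  then have E_r: "Ebeta f \<beta> (rfun f \<mu>) = 2 / \<beta> - \<beta> * Ebeta f \<beta> (\<lambda>x. kfun f \<mu> x * kfun f \<mu> x)"
    unfolding Ebeta_kfun by (simp add: algebra_simps)
  show ?thesis
    using beta_pos
    by (simp add: E_r Rfun_def Vfun_eq Varbeta_eq_Covbeta Covbeta_poly Ebeta_diff_poly moment_intros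
        Ebeta_kfun field_simps power2_eq_square)
qed

lemma Varbeta_h_minus_half_k:
  "Varbeta f \<beta> (\<lambda>x. hfun f x - kfun f \<mu> x / 2)
    = Ifun f \<beta> - Vfun f \<mu> \<beta> + Varbeta f \<beta> (kfun f \<mu>) / 4"
proof -
  define w where "w x = hfun f x - 1/2 * kfun f \<mu> x" for x
  have w_poly: "isCont w x" "poly_bounded w" for x
    unfolding w_def by (intro moment_intros)+
  have E_w: "Ebeta f \<beta> w = Ebeta f \<beta> (hfun f) - 1/2 * Ebeta f \<beta> (kfun f \<mu>)"
    unfolding w_def by (subst Ebeta_diff_poly) (intro moment_intros | simp add: Ebeta_divide_const)+
  have "(\<lambda>x. w x * w x)
      = (\<lambda>x. (hfun f x * hfun f x - hfun f x * kfun f \<mu> x) + 1/4 * (kfun f \<mu> x * kfun f \<mu> x))"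
    by (simp add: fun_eq_iff w_def algebra_simps)
  then have E_ww: "Ebeta f \<beta> (\<lambda>x. w x * w x) = Ebeta f \<beta> (\<lambda>x. hfun f x * hfun f x)
      - Ebeta f \<beta> (\<lambda>x. hfun f x * kfun f \<mu> x) + 1/4 * Ebeta f \<beta> (\<lambda>x. kfun f \<mu> x * kfun f \<mu> x)"
    by (simp only: Ebeta_add_poly Ebeta_diff_poly Ebeta_cmult moment_intros)
  have "(\<lambda>x. hfun f x - kfun f \<mu> x / 2) = w"
    by (simp add: fun_eq_iff w_def)
  then have "Varbeta f \<beta> (\<lambda>x. hfun f x - kfun f \<mu> x / 2)
      = Ebeta f \<beta> (\<lambda>x. w x * w x) - Ebeta f \<beta> w * Ebeta f \<beta> w"
    by (simp add: Varbeta_eq_Covbeta Covbeta_poly w_poly)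
  also have "\<dots> = Ifun f \<beta> - Vfun f \<mu> \<beta> + Varbeta f \<beta> (kfun f \<mu>) / 4"
    unfolding E_w E_ww
    by (simp add: Ifun_def Vfun_def Varbeta_eq_Covbeta Covbeta_poly moment_intros field_simps)
  finally show ?thesis .
qed

lemma variance_identity:
  "Vfun f \<mu> \<beta> / 2 - Ifun f \<beta> + Rfun f \<mu> \<beta> / (4 * \<beta>)
    = - Varbeta f \<beta> (\<lambda>x. hfun f x - kfun f \<mu> x / 2)"
  unfolding Rfun_eq Varbeta_h_minus_half_k using beta_pos by (simp add: field_simps)

end

lemma tempered_densityI:
  fixes f :: "real \<Rightarrow> real"
  assumes pos: "\<And>x. f x > 0" and smooth: "C4 f"
    and unimodal: "mono_on {..\<mu>} f" "antimono_on {\<mu>..} f"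
    and regvar: "\<exists>\<alpha>>0. \<forall>x>0.
        ((\<lambda>t. (- ln (f (t * x))) / (- ln (f t))) \<longlongrightarrow> x powr \<alpha>) at_infinity"
    and bound4: "\<And>x. \<bar>(deriv ^^ 4) (\<lambda>y. ln (f y)) x\<bar> < M"
    and "\<beta> > 0"
  shows "tempered_density f \<beta>"
proof -
  have D: "DERIV ((deriv ^^ j) (hfun f)) x :> (deriv ^^ Suc j) (hfun f) x" if "j < 4" for j x
    using C4_ln_differentiable[OF pos smooth that]
    by (simp add: hfun_def DERIV_deriv_iff_real_differentiable)
  have pb4: "poly_bounded ((deriv ^^ 4) (hfun f))"
    using bound4 by (intro poly_boundedI[of _ M 0]) (simp add: hfun_def less_imp_le)
  have pb: "poly_bounded ((deriv ^^ j) (hfun f))" if "j \<le> 4" for j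
    using that
  proof (induction j rule: inc_induct)
    case base
    show ?case by (rule pb4)
  next
    case (step n)
    then show ?case using poly_bounded_DERIV[OF D] by blast
  qed
  show ?thesis
  proof
    show "DERIV (hfun f) x :> deriv (hfun f) x" 
      "DERIV (deriv (hfun f)) x :> deriv (deriv (hfun f)) x" for x
      using D[of 0 x] D[of 1 x] by simp_all
    show "isCont (deriv (deriv (hfun f))) x" for x
      using DERIV_isCont[OF D[of 2 x]] by (simp add: numeral_eq_Suc)
    show "poly_bounded (hfun f)" "poly_bounded (deriv (hfun f))"
      "poly_bounded (deriv (deriv (hfun f)))"
      using pb[of 0] pb[of 1] pb[of 2] by (simp_all add: numeral_eq_Suc)
    show "\<exists>T. \<forall>x. \<bar>x\<bar> \<ge> T \<longrightarrow> (1 + \<bar>x\<bar>) ^ n * f x powr \<beta> \<le> 1" for n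
      by (rule regularly_varying_powr_decay[OF pos unimodal regvar \<open>\<beta> > 0\<close>])
  qed (use pos \<open>\<beta> > 0\<close> in auto)
qed

theorem proposition4:
  fixes f :: "real \<Rightarrow> real" and \<mu> M \<beta> l :: real
  assumes pos: "\<And>x. f x > 0"
    and smooth: "C4 f"
    and unimodal: "mono_on {..\<mu>} f" "antimono_on {\<mu>..} f"
    and regvar: "\<exists>\<alpha>>0. \<forall>x>0.
        ((\<lambda>t. (- ln (f (t * x))) / (- ln (f t))) \<longlongrightarrow> x powr \<alpha>) at_infinity"
    and Mpos: "M > 0"
    and bound4: "\<And>x. \<bar>(deriv ^^ 4) (\<lambda>y. ln (f y)) x\<bar> < M"
    and beta: "\<beta> > 0" and ell: "l > 0"
  shows "l\<^sup>2 * (Vfun f \<mu> \<beta> / 2 - Ifun f \<beta> + Rfun f \<mu> \<beta> / (4 * \<beta>))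
       = - l\<^sup>2 * Varbeta f \<beta> (\<lambda>x. hfun f x - kfun f \<mu> x / 2)"
proof -
  interpret tempered_density f \<beta>
    using tempered_densityI[OF pos smooth unimodal regvar bound4 beta] .
  \<comment> \<open>The identity holds without the hypotheses \<open>M > 0\<close> and \<open>l > 0\<close>.\<close>
  show ?thesis
    by (simp add: variance_identity)
qed

end
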